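(* Let $N\ge 1$ and let $M=\prod_{i=1}^{N}M_i\subset\mathbb{R}^N$ be compact, with each $M_i\subset\mathbb{R}$. Let $U=\prod_{i=1}^{N}U_i\subset\mathbb{C}^N$, where each $U_i$ is an open domain of $\mathbb{C}$ symmetric about the real axis with $M_i\subset U_i$ (so $M\subset U$), and let $\partial\bar U:=\prod_{i=1}^N\partial \bar U_i$. Let $f:M\to\mathbb{R}$ be continuous. Then for every $\epsilon>0$ there exist an integer $m\ge1$, points $\boldsymbol{\xi}_1,\dots,\boldsymbol{\xi}_m\in\partial\bar U$ and complex coefficients $\theta_1,\dots,\theta_m\in\mathbb{C}$ such that \[\sup_{\mathbf{x}\in M}\Big|f(\mathbf{x})-\sum_{k=1}^{m}\theta_k\,K(\boldsymbol{\xi}_k,\mathbf{x})\Big|<\epsilon .\]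
   Context: For $\boldsymbol{\xi}=(\xi^1,\dots,\xi^N)\in\partial\bar U$ (so $\xi^i\in\partial\bar U_i$ for each $i$) and $\mathbf{x}=(x_1,\dots,x_N)\in M$, the Cauchy kernel is $K(\boldsymbol{\xi},\mathbf{x}):=\prod_{i=1}^{N}\frac{1}{\xi^i-x_i}$; since $M_i\subset U_i$ is compact and $\xi^i$ lies on the boundary of $U_i$, the denominators do not vanish on $M$. *)

theory Defs
  imports "HOL-Analysis.Analysis"
begin

text \<open>Cauchy kernel K(xi, x) = prod_i 1/(xi_i - x_i), for xi in C^N and x in R^N.
  The dimension N is the cardinality of the finite index type 'n.\<close>
definition cauchy_kernel :: "complex ^ 'n \<Rightarrow> real ^ 'n \<Rightarrow> complex" where
  "cauchy_kernel \<xi> x = (\<Prod>i\<in>UNIV. 1 / (\<xi> $ i - complex_of_real (x $ i)))"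

definition sym_domain :: "complex set \<Rightarrow> bool" where
  "sym_domain U \<longleftrightarrow> open U \<and> connected U \<and> U \<noteq> {} \<and> (\<forall>z\<in>U. cnj z \<in> U)"

end

theory Submission
  imports Defs
begin

text \<open>Take the frontier P i of closure (U i) as the set of admissible poles in coordinate i and
  consider the uniform limits on M of linear combinations of kernels K(\<xi>, x) with \<xi> i \<in> P i.
  By partial fractions, a kernel times a pole factor 1 / (\<zeta> - x j) with \<zeta> \<in> P j is a
  combination of two kernels if \<zeta> \<noteq> \<xi> j, and a uniform limit of such combinations if
  \<zeta> = \<xi> j, because P j has no isolated points. So every polynomial in the pole factors maps
  these limits to limits under multiplication. As each P i is symmetric under conjugation, the
  real-valued such polynomials form a point-separating algebra, and Stone-Weierstrass approximates
  f / \<rho> in it, where \<rho>(x) = |K(\<xi>, x)|^2 = K(\<xi>, x) K(cnj \<xi>, x) > 0 is itself such a limit.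
  Hence f = (f / \<rho>) \<rho> is one as well.\<close>

lemma not_in_frontier_closure_of_open:
  assumes "open V" and "z \<in> V"
  shows "z \<notin> frontier (closure V)"
  using assms interior_maximal[OF closure_subset] by (auto simp: frontier_def)

text \<open>If the frontier had an isolated point z, the connected punctured disc around z would avoid
  the frontier and hence lie entirely inside or entirely outside closure V; either way z could not
  be a frontier point.\<close>
lemma islimpt_frontier_closure_of_open:
  fixes V :: "'a::euclidean_space set"
  assumes "2 \<le> DIM('a)" and "open V" and z: "z \<in> frontier (closure V)"
  shows "z islimpt frontier (closure V)"
proof (rule ccontr)
  assume "\<not> ?thesis"
  then obtain r where "r > 0" and r: "\<And>y. y \<in> frontier (closure V) \<Longrightarrow> y \<noteq> z \<Longrightarrow> r \<le> dist y z"
    unfolding islimpt_approachable by (meson not_le)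
  define D where "D = ball z r - {z}"
  have "connected D"
    unfolding D_def using assms(1) by (rule connected_punctured_ball)
  moreover have "D \<inter> frontier (closure V) = {}"
    using r by (force simp: D_def dist_commute)
  ultimately have "D \<subseteq> closure V \<or> D \<inter> closure V = {}"
    using connected_Int_frontier[of D "closure V"] by blast
  moreover have "z \<in> closure V" "z \<notin> interior (closure V)"
    using z by (auto simp: frontier_def)
  ultimately show False
  proof (elim disjE)
    assume "D \<subseteq> closure V"
    with \<open>z \<in> closure V\<close> have "ball z r \<subseteq> closure V"
      by (auto simp: D_def)
    with \<open>r > 0\<close> have "z \<in> interior (closure V)"
      by (meson centre_in_ball interior_maximal open_ball subsetD)
    with \<open>z \<notin> interior (closure V)\<close> show False ..
  next
    assume "D \<inter> closure V = {}"
    moreover have "z \<notin> V"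
      using not_in_frontier_closure_of_open[OF assms(2)] z by blast
    ultimately have "\<forall>y\<in>V. r \<le> dist y z"
      using closure_subset[of V] by (force simp: D_def dist_commute)
    with \<open>z \<in> closure V\<close> \<open>r > 0\<close> show False
      unfolding closure_approachable by (meson not_le)
  qed
qed

lemma cnj_in_frontier_closure:
  assumes "\<And>w. w \<in> V \<Longrightarrow> cnj w \<in> V" and "z \<in> frontier (closure V)"
  shows "cnj z \<in> frontier (closure V)"
proof -
  have inj: "inj cnj"
    by (metis complex_cnj_cnj injI)
  have "cnj ` V = V"
    using assms(1) by (auto simp: image_iff) (metis complex_cnj_cnj)
  then have closure: "cnj ` closure V = closure V"
    using closure_injective_linear_image[OF linear_cnj inj, of V] by simp
  then have "cnj ` interior (closure V) = interior (closure V)"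
    using interior_injective_linear_image[OF linear_cnj inj, of "closure V"] by simp
  with closure have "cnj ` frontier (closure V) = frontier (closure V)"
    unfolding frontier_def closure_closure by (metis image_set_diff[OF inj])
  then show ?thesis
    using assms(2) by blast
qed

lemma norm_divide_diff_le:
  fixes a b :: "'a::real_normed_field"
  assumes "d > 0" and "d \<le> norm a" and "d \<le> norm b"
  shows "norm (1 / a - 1 / b) \<le> norm (a - b) / d\<^sup>2"
proof -
  have "a \<noteq> 0" "b \<noteq> 0"
    using assms by auto
  then have "norm (1 / a - 1 / b) = norm (a - b) / (norm a * norm b)"
    by (simp add: divide_simps norm_divide norm_mult norm_minus_commute)
  also have "\<dots> \<le> norm (a - b) / d\<^sup>2"
    using assms by (auto simp: power2_eq_square intro!: divide_left_mono mult_mono mult_pos_pos)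
  finally show ?thesis .
qed

lemma norm_mult_le_by_bound:
  fixes a b :: "'a::real_normed_div_algebra"
  assumes "0 \<le> B" and "norm a \<le> B" and "norm b \<le> e / (B + 1)"
  shows "norm (a * b) \<le> e"
proof -
  have "norm (a * b) \<le> (B + 1) * (e / (B + 1))"
    unfolding norm_mult using assms by (intro mult_mono) auto
  also have "\<dots> = e"
    using assms(1) by simp
  finally show ?thesis .
qed

definition pole_factor :: "'n \<Rightarrow> complex \<Rightarrow> real ^ 'n \<Rightarrow> complex" where
  "pole_factor j \<zeta> x = 1 / (\<zeta> - complex_of_real (x $ j))"

lemma cauchy_kernel_eq_prod: "cauchy_kernel \<xi> x = (\<Prod>i\<in>UNIV. pole_factor i (\<xi> $ i) x)"
  by (simp add: cauchy_kernel_def pole_factor_def)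

lemma cauchy_kernel_split:
  "cauchy_kernel \<xi> x = pole_factor j (\<xi> $ j) x * (\<Prod>i\<in>UNIV - {j}. pole_factor i (\<xi> $ i) x)"
  unfolding cauchy_kernel_eq_prod by (simp add: prod.remove)

lemma cnj_pole_factor: "cnj (pole_factor j \<zeta> x) = pole_factor j (cnj \<zeta>) x"
  by (simp add: pole_factor_def)

lemma cnj_cauchy_kernel: "cnj (cauchy_kernel \<xi> x) = cauchy_kernel (\<chi> i. cnj (\<xi> $ i)) x"
  by (simp add: cauchy_kernel_eq_prod cnj_pole_factor)

locale cauchy_poles =
  fixes M :: "(real ^ 'n::finite) set" and P :: "'n \<Rightarrow> complex set"
  assumes compact_M: "compact M"
    and poles_off_M: "\<And>i x. x \<in> M \<Longrightarrow> complex_of_real (x $ i) \<notin> P i"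
    and poles_islimpt: "\<And>i \<zeta>. \<zeta> \<in> P i \<Longrightarrow> \<zeta> islimpt P i"
    and poles_nonempty: "\<And>i. P i \<noteq> {}"
    and poles_cnj: "\<And>i \<zeta>. \<zeta> \<in> P i \<Longrightarrow> cnj \<zeta> \<in> P i"
begin

definition pole_vectors :: "(complex ^ 'n) set" where
  "pole_vectors = {\<xi>. \<forall>i. \<xi> $ i \<in> P i}"

lemma pole_vector_exists: obtains \<xi> where "\<xi> \<in> pole_vectors"
proof
  show "(\<chi> i. SOME \<zeta>. \<zeta> \<in> P i) \<in> pole_vectors"
    using poles_nonempty by (simp add: pole_vectors_def some_in_eq)
qed

lemma pole_minus_point_nonzero: "\<zeta> \<in> P j \<Longrightarrow> x \<in> M \<Longrightarrow> \<zeta> - complex_of_real (x $ j) \<noteq> 0"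
  using poles_off_M[of x j] by auto

lemma pole_factor_nonzero: "\<zeta> \<in> P j \<Longrightarrow> x \<in> M \<Longrightarrow> pole_factor j \<zeta> x \<noteq> 0"
  using pole_minus_point_nonzero by (simp add: pole_factor_def)

lemma pole_factor_continuous: "\<zeta> \<in> P j \<Longrightarrow> continuous_on M (pole_factor j \<zeta>)"
  unfolding pole_factor_def using pole_minus_point_nonzero by (intro continuous_intros) auto

lemma cauchy_kernel_continuous: "\<xi> \<in> pole_vectors \<Longrightarrow> continuous_on M (cauchy_kernel \<xi>)"
  unfolding cauchy_kernel_eq_prod pole_vectors_def
  by (auto intro!: continuous_on_prod pole_factor_continuous)

lemma poles_bounded_away:
  assumes "\<zeta> \<in> P j"
  obtains d where "d > 0" and "\<And>x. x \<in> M \<Longrightarrow> d \<le> cmod (\<zeta> - complex_of_real (x $ j))"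
proof -
  let ?T = "(\<lambda>x. complex_of_real (x $ j)) ` M"
  have "compact ?T"
    using compact_M by (intro compact_continuous_image continuous_intros)
  moreover have "\<zeta> \<notin> ?T"
    using pole_minus_point_nonzero[OF assms] by auto
  ultimately have "\<exists>d>0. \<forall>t\<in>?T. d \<le> dist \<zeta> t"
    by (intro separate_point_closed compact_imp_closed)
  then obtain d where "d > 0" and "\<forall>t\<in>?T. d \<le> dist \<zeta> t"
    by blast
  then show ?thesis
    using that by (simp add: dist_norm)
qed

lemma pole_factor_uniform_in_pole:
  assumes "\<zeta> \<in> P j" and "e > 0"
  obtains r where "r > 0"
    and "\<And>\<zeta>' x. dist \<zeta>' \<zeta> < r \<Longrightarrow> x \<in> M \<Longrightarrow> cmod (pole_factor j \<zeta>' x - pole_factor j \<zeta> x) \<le> e"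
proof -
  obtain d where "d > 0" and d: "\<And>x. x \<in> M \<Longrightarrow> d \<le> cmod (\<zeta> - complex_of_real (x $ j))"
    using poles_bounded_away[OF assms(1)] by blast
  define r where "r = min (d / 2) (e * (d / 2)\<^sup>2)"
  have "r > 0"
    using \<open>d > 0\<close> \<open>e > 0\<close> by (simp add: r_def)
  moreover have "cmod (pole_factor j \<zeta>' x - pole_factor j \<zeta> x) \<le> e"
    if "dist \<zeta>' \<zeta> < r" and "x \<in> M" for \<zeta>' x
  proof -
    let ?t = "complex_of_real (x $ j)"
    have near: "cmod (\<zeta>' - \<zeta>) < r"
      using that(1) by (simp add: dist_norm)
    have "cmod (\<zeta> - ?t) \<le> cmod (\<zeta>' - ?t) + cmod (\<zeta>' - \<zeta>)"
      using norm_triangle_ineq[of "\<zeta>' - ?t" "\<zeta> - \<zeta>'"] by (simp add: norm_minus_commute)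
    then have "d / 2 \<le> cmod (\<zeta>' - ?t)" "d / 2 \<le> cmod (\<zeta> - ?t)"
      using d[OF that(2)] near \<open>d > 0\<close> by (auto simp: r_def)
    then have "cmod (pole_factor j \<zeta>' x - pole_factor j \<zeta> x) \<le> cmod (\<zeta>' - \<zeta>) / (d / 2)\<^sup>2"
      using norm_divide_diff_le[of "d / 2" "\<zeta>' - ?t" "\<zeta> - ?t"] \<open>d > 0\<close>
      by (simp add: pole_factor_def)
    also have "\<dots> \<le> e"
    proof -
      have "cmod (\<zeta>' - \<zeta>) \<le> e * (d / 2)\<^sup>2"
        using near by (simp add: r_def)
      then show ?thesis
        using \<open>d > 0\<close> by (simp add: pos_divide_le_eq)
    qed
    finally show ?thesis .
  qed
  ultimately show ?thesis
    using that by blast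
qed

inductive_set kernel_sums :: "(real ^ 'n \<Rightarrow> complex) set" where
  zero: "(\<lambda>x. 0) \<in> kernel_sums"
| add_kernel: "s \<in> kernel_sums \<Longrightarrow> \<xi> \<in> pole_vectors \<Longrightarrow>
    (\<lambda>x. s x + c * cauchy_kernel \<xi> x) \<in> kernel_sums"

lemma cauchy_kernel_in_kernel_sums: "\<xi> \<in> pole_vectors \<Longrightarrow> cauchy_kernel \<xi> \<in> kernel_sums"
  using kernel_sums.add_kernel[OF kernel_sums.zero, of \<xi> 1] by simp

lemma kernel_sums_add:
  assumes "s \<in> kernel_sums" and "t \<in> kernel_sums"
  shows "(\<lambda>x. s x + t x) \<in> kernel_sums"
  using assms(2)
proof (induction t rule: kernel_sums.induct)
  case zero
  then show ?case using assms(1) by simp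
next
  case (add_kernel t \<xi> c)
  from kernel_sums.add_kernel[OF add_kernel.IH add_kernel.hyps(2), of c]
  show ?case by (simp add: add.assoc)
qed

lemma kernel_sums_scale: "s \<in> kernel_sums \<Longrightarrow> (\<lambda>x. a * s x) \<in> kernel_sums"
proof (induction s rule: kernel_sums.induct)
  case zero
  then show ?case by (simp add: kernel_sums.zero)
next
  case (add_kernel s \<xi> c)
  from kernel_sums.add_kernel[OF add_kernel.IH add_kernel.hyps(2), of "a * c"]
  show ?case by (simp add: algebra_simps)
qed

lemma kernel_sums_eq_sum:
  assumes "s \<in> kernel_sums"
  shows "\<exists>m \<xi> \<theta>. m \<ge> (1::nat) \<and> (\<forall>k\<in>{1..m}. \<xi> k \<in> pole_vectors) \<and>
    (\<forall>x. s x = (\<Sum>k=1..m. \<theta> k * cauchy_kernel (\<xi> k) x))"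
  using assms
proof (induction s rule: kernel_sums.induct)
  case zero
  obtain \<xi> where "\<xi> \<in> pole_vectors"
    using pole_vector_exists .
  then show ?case
    by (intro exI[of _ 1] exI[of _ "\<lambda>_. \<xi>"] exI[of _ "\<lambda>_. 0"]) simp
next
  case (add_kernel s \<xi> c)
  then obtain m :: nat and \<xi>s \<theta> where "m \<ge> 1" and poles: "\<forall>k\<in>{1..m}. \<xi>s k \<in> pole_vectors"
    and s: "\<forall>x. s x = (\<Sum>k=1..m. \<theta> k * cauchy_kernel (\<xi>s k) x)"
    by blast
  have "\<forall>k\<in>{1..Suc m}. (\<xi>s(Suc m := \<xi>)) k \<in> pole_vectors"
    using poles add_kernel.hyps(2) by auto
  moreover have "s x + c * cauchy_kernel \<xi> x =
      (\<Sum>k=1..Suc m. (\<theta>(Suc m := c)) k * cauchy_kernel ((\<xi>s(Suc m := \<xi>)) k) x)" for x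
    unfolding s[rule_format] by (auto intro!: sum.cong)
  ultimately show ?case
    by (intro exI[of _ "Suc m"] exI[of _ "\<xi>s(Suc m := \<xi>)"] exI[of _ "\<theta>(Suc m := c)"]) auto
qed

definition kernel_limits :: "(real ^ 'n \<Rightarrow> complex) set" where
  "kernel_limits = {g. \<forall>e>0. \<exists>s\<in>kernel_sums. \<forall>x\<in>M. cmod (g x - s x) \<le> e}"

lemma kernel_limitsE:
  assumes "g \<in> kernel_limits" and "e > 0"
  obtains s where "s \<in> kernel_sums" and "\<forall>x\<in>M. cmod (g x - s x) \<le> e"
  using assms unfolding kernel_limits_def by blast

lemma kernel_sums_subset_limits: "kernel_sums \<subseteq> kernel_limits"
proof
  fix s
  assume "s \<in> kernel_sums"
  then show "s \<in> kernel_limits"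
    unfolding kernel_limits_def by (auto intro: bexI[of _ s])
qed

lemma kernel_limits_cong:
  "g \<in> kernel_limits \<Longrightarrow> (\<And>x. x \<in> M \<Longrightarrow> g x = h x) \<Longrightarrow> h \<in> kernel_limits"
  unfolding kernel_limits_def by auto

lemma kernel_limits_closed:
  assumes "\<And>e. e > 0 \<Longrightarrow> \<exists>u\<in>kernel_limits. \<forall>x\<in>M. cmod (h x - u x) \<le> e"
  shows "h \<in> kernel_limits"
  unfolding kernel_limits_def mem_Collect_eq
proof (intro allI impI)
  fix e :: real
  assume "e > 0"
  then have "e / 2 > 0"
    by simp
  then obtain g where "g \<in> kernel_limits" and g: "\<forall>x\<in>M. cmod (h x - g x) \<le> e / 2"
    using assms by blast
  obtain s where "s \<in> kernel_sums" and s: "\<forall>x\<in>M. cmod (g x - s x) \<le> e / 2"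
    by (rule kernel_limitsE[OF \<open>g \<in> kernel_limits\<close> \<open>e / 2 > 0\<close>])
  have "cmod (h x - s x) \<le> e" if "x \<in> M" for x
    using norm_diff_triangle_le[of "h x" "g x" "e / 2" "s x" "e / 2"] g s that by simp
  with \<open>s \<in> kernel_sums\<close> show "\<exists>s\<in>kernel_sums. \<forall>x\<in>M. cmod (h x - s x) \<le> e"
    by blast
qed

lemma kernel_limits_add:
  assumes "g \<in> kernel_limits" and "h \<in> kernel_limits"
  shows "(\<lambda>x. g x + h x) \<in> kernel_limits"
  unfolding kernel_limits_def mem_Collect_eq
proof (intro allI impI)
  fix e :: real
  assume "e > 0"
  then have "e / 2 > 0"
    by simp
  obtain s where "s \<in> kernel_sums" and s: "\<forall>x\<in>M. cmod (g x - s x) \<le> e / 2"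
    by (rule kernel_limitsE[OF assms(1) \<open>e / 2 > 0\<close>])
  obtain t where "t \<in> kernel_sums" and t: "\<forall>x\<in>M. cmod (h x - t x) \<le> e / 2"
    by (rule kernel_limitsE[OF assms(2) \<open>e / 2 > 0\<close>])
  have "cmod (g x + h x - (s x + t x)) \<le> e" if "x \<in> M" for x
    using norm_diff_triangle_ineq[of "g x" "h x" "s x" "t x"] s[rule_format, OF that] t[rule_format, OF that]
    by linarith
  moreover have "(\<lambda>x. s x + t x) \<in> kernel_sums"
    using kernel_sums_add[OF \<open>s \<in> kernel_sums\<close> \<open>t \<in> kernel_sums\<close>] .
  ultimately show "\<exists>u\<in>kernel_sums. \<forall>x\<in>M. cmod (g x + h x - u x) \<le> e"
    by (intro bexI[where x = "\<lambda>x. s x + t x"]) auto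
qed

lemma kernel_limits_scale:
  assumes "g \<in> kernel_limits"
  shows "(\<lambda>x. a * g x) \<in> kernel_limits"
proof (rule kernel_limits_closed)
  fix e :: real
  assume "e > 0"
  then have "e / (cmod a + 1) > 0"
    by (simp add: add_nonneg_pos)
  then obtain s where "s \<in> kernel_sums" and s: "\<forall>x\<in>M. cmod (g x - s x) \<le> e / (cmod a + 1)"
    by (rule kernel_limitsE[OF assms])
  have "cmod (a * g x - a * s x) \<le> e" if "x \<in> M" for x
    using norm_mult_le_by_bound[of "cmod a" a "g x - s x" e] s that
    by (simp add: right_diff_distrib)
  moreover have "(\<lambda>x. a * s x) \<in> kernel_limits"
    using kernel_sums_scale[OF \<open>s \<in> kernel_sums\<close>] kernel_sums_subset_limits by blast
  ultimately show "\<exists>u\<in>kernel_limits. \<forall>x\<in>M. cmod (a * g x - u x) \<le> e"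
    by (intro bexI[where x = "\<lambda>x. a * s x"]) auto
qed

lemma pole_factor_times_kernel_distinct:
  assumes "\<zeta> \<in> P j" and "\<xi> \<in> pole_vectors" and "\<zeta> \<noteq> \<xi> $ j"
  shows "(\<lambda>x. pole_factor j \<zeta> x * cauchy_kernel \<xi> x) \<in> kernel_limits"
proof -
  define \<xi>' where "\<xi>' = (\<chi> i. if i = j then \<zeta> else \<xi> $ i)"
  define c where "c = 1 / (\<xi> $ j - \<zeta>)"
  have "\<xi>' \<in> pole_vectors"
    using assms(1,2) by (simp add: \<xi>'_def pole_vectors_def)
  then have "(\<lambda>x. 0 + c * cauchy_kernel \<xi>' x + (- c) * cauchy_kernel \<xi> x) \<in> kernel_sums"
    using assms(2) by (intro kernel_sums.intros)
  then have "(\<lambda>x. 0 + c * cauchy_kernel \<xi>' x + (- c) * cauchy_kernel \<xi> x) \<in> kernel_limits"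
    using kernel_sums_subset_limits by blast
  then show ?thesis
  proof (rule kernel_limits_cong)
    fix x
    assume "x \<in> M"
    let ?R = "\<Prod>i\<in>UNIV - {j}. pole_factor i (\<xi> $ i) x"
    have kernel': "cauchy_kernel \<xi>' x = pole_factor j \<zeta> x * ?R"
      unfolding cauchy_kernel_split[of \<xi>' x j] by (simp add: \<xi>'_def)
    have kernel: "cauchy_kernel \<xi> x = pole_factor j (\<xi> $ j) x * ?R"
      by (rule cauchy_kernel_split)
    have "\<zeta> - complex_of_real (x $ j) \<noteq> 0" "\<xi> $ j - complex_of_real (x $ j) \<noteq> 0"
      using pole_minus_point_nonzero assms(1,2) \<open>x \<in> M\<close> by (auto simp: pole_vectors_def)
    then have partial_fractions:
      "pole_factor j \<zeta> x * pole_factor j (\<xi> $ j) x = c * (pole_factor j \<zeta> x - pole_factor j (\<xi> $ j) x)"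
      using assms(3) by (simp add: pole_factor_def c_def field_simps)
    show "0 + c * cauchy_kernel \<xi>' x + (- c) * cauchy_kernel \<xi> x = pole_factor j \<zeta> x * cauchy_kernel \<xi> x"
      unfolding kernel' kernel mult.assoc[symmetric] partial_fractions by (simp add: algebra_simps)
  qed
qed

lemma pole_factor_times_kernel:
  assumes "\<zeta> \<in> P j" and "\<xi> \<in> pole_vectors"
  shows "(\<lambda>x. pole_factor j \<zeta> x * cauchy_kernel \<xi> x) \<in> kernel_limits"
proof (cases "\<zeta> = \<xi> $ j")
  case False
  with assms show ?thesis
    by (rule pole_factor_times_kernel_distinct)
next
  case True
  obtain B where "B \<ge> 0" and B: "\<And>x. x \<in> M \<Longrightarrow> cmod (cauchy_kernel \<xi> x) \<le> B"
    using continuous_on_compact_bound[OF compact_M cauchy_kernel_continuous[OF assms(2)]] by blast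
  show ?thesis
  proof (rule kernel_limits_closed)
    fix e :: real
    assume "e > 0"
    with \<open>B \<ge> 0\<close> have "e / (B + 1) > 0"
      by simp
    then obtain r where "r > 0" and r: "\<And>\<zeta>' x. dist \<zeta>' \<zeta> < r \<Longrightarrow> x \<in> M \<Longrightarrow>
        cmod (pole_factor j \<zeta>' x - pole_factor j \<zeta> x) \<le> e / (B + 1)"
      using pole_factor_uniform_in_pole[OF assms(1)] by blast
    then obtain \<zeta>' where "\<zeta>' \<in> P j" and "\<zeta>' \<noteq> \<zeta>" and "dist \<zeta>' \<zeta> < r"
      using poles_islimpt[OF assms(1)] unfolding islimpt_approachable by blast
    have "(\<lambda>x. pole_factor j \<zeta>' x * cauchy_kernel \<xi> x) \<in> kernel_limits"
      using \<open>\<zeta>' \<in> P j\<close> assms(2) \<open>\<zeta>' \<noteq> \<zeta>\<close> True by (intro pole_factor_times_kernel_distinct) auto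
    moreover have "cmod (pole_factor j \<zeta> x * cauchy_kernel \<xi> x - pole_factor j \<zeta>' x * cauchy_kernel \<xi> x) \<le> e"
      if "x \<in> M" for x
      using norm_mult_le_by_bound[OF \<open>B \<ge> 0\<close> B[OF that] r[OF \<open>dist \<zeta>' \<zeta> < r\<close> that]]
      by (simp add: algebra_simps norm_minus_commute)
    ultimately show "\<exists>u\<in>kernel_limits. \<forall>x\<in>M.
        cmod (pole_factor j \<zeta> x * cauchy_kernel \<xi> x - u x) \<le> e"
      by (intro bexI[where x = "\<lambda>x. pole_factor j \<zeta>' x * cauchy_kernel \<xi> x"]) auto
  qed
qed

definition multipliers :: "(real ^ 'n \<Rightarrow> complex) set" where
  "multipliers = {\<phi>. \<forall>g\<in>kernel_limits. (\<lambda>x. \<phi> x * g x) \<in> kernel_limits}"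

lemma multipliersD: "\<phi> \<in> multipliers \<Longrightarrow> g \<in> kernel_limits \<Longrightarrow> (\<lambda>x. \<phi> x * g x) \<in> kernel_limits"
  unfolding multipliers_def by blast

lemma multipliersI_kernels:
  assumes "continuous_on M \<phi>"
    and "\<And>\<xi>. \<xi> \<in> pole_vectors \<Longrightarrow> (\<lambda>x. \<phi> x * cauchy_kernel \<xi> x) \<in> kernel_limits"
  shows "\<phi> \<in> multipliers"
proof -
  have on_sums: "(\<lambda>x. \<phi> x * s x) \<in> kernel_limits" if "s \<in> kernel_sums" for s
    using that
  proof (induction s rule: kernel_sums.induct)
    case zero
    then show ?case
      using kernel_sums.zero kernel_sums_subset_limits by auto
  next
    case (add_kernel s \<xi> c)
    have "(\<lambda>x. \<phi> x * s x + c * (\<phi> x * cauchy_kernel \<xi> x)) \<in> kernel_limits"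
      using add_kernel.IH assms(2)[OF add_kernel.hyps(2)] by (intro kernel_limits_add kernel_limits_scale)
    then show ?case
      by (simp add: algebra_simps)
  qed
  obtain B where "B \<ge> 0" and B: "\<And>x. x \<in> M \<Longrightarrow> cmod (\<phi> x) \<le> B"
    using continuous_on_compact_bound[OF compact_M assms(1)] by blast
  have "(\<lambda>x. \<phi> x * g x) \<in> kernel_limits" if g: "g \<in> kernel_limits" for g
  proof (rule kernel_limits_closed)
    fix e :: real
    assume "e > 0"
    with \<open>B \<ge> 0\<close> have "e / (B + 1) > 0"
      by simp
    then obtain s where "s \<in> kernel_sums" and s: "\<forall>x\<in>M. cmod (g x - s x) \<le> e / (B + 1)"
      by (rule kernel_limitsE[OF g])
    have "cmod (\<phi> x * g x - \<phi> x * s x) \<le> e" if "x \<in> M" for x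
      using norm_mult_le_by_bound[OF \<open>B \<ge> 0\<close> B[OF that] s[rule_format, OF that]]
      by (simp add: right_diff_distrib)
    with on_sums[OF \<open>s \<in> kernel_sums\<close>]
    show "\<exists>u\<in>kernel_limits. \<forall>x\<in>M. cmod (\<phi> x * g x - u x) \<le> e"
      by (intro bexI[where x = "\<lambda>x. \<phi> x * s x"]) auto
  qed
  then show ?thesis
    unfolding multipliers_def by blast
qed

lemma pole_factor_multiplier: "\<zeta> \<in> P j \<Longrightarrow> pole_factor j \<zeta> \<in> multipliers"
  by (intro multipliersI_kernels pole_factor_continuous pole_factor_times_kernel)

lemma multipliers_const: "(\<lambda>_. c) \<in> multipliers"
  unfolding multipliers_def by (auto intro: kernel_limits_scale)

lemma multipliers_add:
  "\<phi> \<in> multipliers \<Longrightarrow> \<psi> \<in> multipliers \<Longrightarrow> (\<lambda>x. \<phi> x + \<psi> x) \<in> multipliers"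
  unfolding multipliers_def by (auto simp: distrib_right intro: kernel_limits_add)

lemma multipliers_mult:
  assumes "\<phi> \<in> multipliers" and "\<psi> \<in> multipliers"
  shows "(\<lambda>x. \<phi> x * \<psi> x) \<in> multipliers"
  using multipliersD[OF assms(1) multipliersD[OF assms(2)]]
  unfolding multipliers_def by (simp add: mult.assoc)

lemma multipliers_prod: "(\<And>i. i \<in> I \<Longrightarrow> \<phi> i \<in> multipliers) \<Longrightarrow> (\<lambda>x. \<Prod>i\<in>I. \<phi> i x) \<in> multipliers"
proof (induction I rule: infinite_finite_induct)
  case (insert i I)
  then show ?case
    using multipliers_mult[of "\<phi> i" "\<lambda>x. \<Prod>i\<in>I. \<phi> i x"] by simp
qed (simp_all add: multipliers_const)

lemma cauchy_kernel_multiplier: "\<xi> \<in> pole_vectors \<Longrightarrow> cauchy_kernel \<xi> \<in> multipliers"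
  unfolding cauchy_kernel_eq_prod[abs_def] pole_vectors_def
  by (intro multipliers_prod pole_factor_multiplier) simp

definition real_multipliers :: "(real ^ 'n \<Rightarrow> real) set" where
  "real_multipliers = {h. continuous_on M h \<and> (\<lambda>x. complex_of_real (h x)) \<in> multipliers}"

lemma Re_Im_real_multipliers:
  assumes "continuous_on M \<phi>" and "\<phi> \<in> multipliers" and "(\<lambda>x. cnj (\<phi> x)) \<in> multipliers"
  shows "(\<lambda>x. Re (\<phi> x)) \<in> real_multipliers" and "(\<lambda>x. Im (\<phi> x)) \<in> real_multipliers"
proof -
  have "(\<lambda>x. complex_of_real (Re (\<phi> x))) = (\<lambda>x. (1 / 2) * (\<phi> x + cnj (\<phi> x)))"
    by (simp add: fun_eq_iff complex_eq_iff)
  also have "\<dots> \<in> multipliers"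
    using assms(2,3) by (intro multipliers_mult multipliers_add multipliers_const)
  finally show "(\<lambda>x. Re (\<phi> x)) \<in> real_multipliers"
    using assms(1) by (simp add: real_multipliers_def continuous_on_Re)
  have "(\<lambda>x. complex_of_real (Im (\<phi> x))) = (\<lambda>x. (- \<i> / 2) * (\<phi> x + (- 1) * cnj (\<phi> x)))"
    by (simp add: fun_eq_iff complex_eq_iff)
  also have "\<dots> \<in> multipliers"
    using assms(2,3) by (intro multipliers_mult multipliers_add multipliers_const)
  finally show "(\<lambda>x. Im (\<phi> x)) \<in> real_multipliers"
    using assms(1) by (simp add: real_multipliers_def continuous_on_Im)
qed

lemma function_ring_real_multipliers: "function_ring_on real_multipliers M"
proof
  show "compact M"
    by (rule compact_M)
next
  fix f g
  assume "f \<in> real_multipliers" and "g \<in> real_multipliers"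
  then have "continuous_on M f" "continuous_on M g"
    and "(\<lambda>x. complex_of_real (f x)) \<in> multipliers" "(\<lambda>x. complex_of_real (g x)) \<in> multipliers"
    by (simp_all add: real_multipliers_def)
  then show "(\<lambda>x. f x + g x) \<in> real_multipliers" and "(\<lambda>x. f x * g x) \<in> real_multipliers"
    unfolding real_multipliers_def
    by (simp_all add: continuous_on_add continuous_on_mult multipliers_add multipliers_mult)
next
  fix c :: real
  show "(\<lambda>_. c) \<in> real_multipliers"
    by (simp add: real_multipliers_def multipliers_const)
next
  fix f
  assume "f \<in> real_multipliers"
  then show "continuous_on M f"
    by (simp add: real_multipliers_def)
next
  fix x y
  assume "x \<in> M" and "y \<in> M" and "x \<noteq> y"
  then obtain i where "x $ i \<noteq> y $ i"
    by (auto simp: vec_eq_iff)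
  obtain \<xi> where "\<xi> \<in> pole_vectors"
    using pole_vector_exists .
  then have \<zeta>: "\<xi> $ i \<in> P i" "cnj (\<xi> $ i) \<in> P i"
    by (auto simp: pole_vectors_def poles_cnj)
  let ?\<phi> = "pole_factor i (\<xi> $ i)"
  have "?\<phi> x \<noteq> ?\<phi> y"
    using \<open>x $ i \<noteq> y $ i\<close> by (simp add: pole_factor_def)
  then have "Re (?\<phi> x) \<noteq> Re (?\<phi> y) \<or> Im (?\<phi> x) \<noteq> Im (?\<phi> y)"
    by (simp add: complex_eq_iff)
  moreover have "continuous_on M ?\<phi>" "?\<phi> \<in> multipliers" "(\<lambda>x. cnj (?\<phi> x)) \<in> multipliers"
    using \<zeta> by (simp_all add: cnj_pole_factor pole_factor_continuous pole_factor_multiplier)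
  note Re_Im = Re_Im_real_multipliers[OF this]
  ultimately show "\<exists>f\<in>real_multipliers. f x \<noteq> f y"
  proof (elim disjE)
    assume "Re (?\<phi> x) \<noteq> Re (?\<phi> y)"
    with Re_Im(1) show ?thesis
      by (intro bexI[where x = "\<lambda>x. Re (?\<phi> x)"]) auto
  next
    assume "Im (?\<phi> x) \<noteq> Im (?\<phi> y)"
    with Re_Im(2) show ?thesis
      by (intro bexI[where x = "\<lambda>x. Im (?\<phi> x)"]) auto
  qed
qed

lemma continuous_in_kernel_limits:
  assumes "continuous_on M f"
  shows "(\<lambda>x. complex_of_real (f x)) \<in> kernel_limits"
proof -
  obtain \<xi> where \<xi>: "\<xi> \<in> pole_vectors"
    using pole_vector_exists .
  define \<rho> where "\<rho> x = (cmod (cauchy_kernel \<xi> x))\<^sup>2" for x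
  have \<rho>_eq: "complex_of_real (\<rho> x) = cauchy_kernel (\<chi> i. cnj (\<xi> $ i)) x * cauchy_kernel \<xi> x" for x
    unfolding \<rho>_def complex_norm_square cnj_cauchy_kernel by simp
  have "(\<chi> i. cnj (\<xi> $ i)) \<in> pole_vectors"
    using \<xi> by (simp add: pole_vectors_def poles_cnj)
  moreover have "cauchy_kernel \<xi> \<in> kernel_limits"
    using cauchy_kernel_in_kernel_sums[OF \<xi>] kernel_sums_subset_limits by blast
  ultimately have \<rho>_limit: "(\<lambda>x. complex_of_real (\<rho> x)) \<in> kernel_limits"
    unfolding \<rho>_eq by (intro multipliersD cauchy_kernel_multiplier)
  have \<rho>_pos: "\<rho> x > 0" if "x \<in> M" for x
    using \<xi> that pole_factor_nonzero
    by (auto simp: \<rho>_def cauchy_kernel_eq_prod pole_vectors_def)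
  have "continuous_on M \<rho>"
    unfolding \<rho>_def using cauchy_kernel_continuous[OF \<xi>] by (intro continuous_intros)
  then obtain C where "C \<ge> 0" and C: "\<And>x. x \<in> M \<Longrightarrow> norm (\<rho> x) \<le> C"
    using continuous_on_compact_bound[OF compact_M] by blast
  have "\<forall>x\<in>M. \<rho> x \<noteq> 0"
    using \<rho>_pos by force
  then have "continuous_on M (\<lambda>x. f x / \<rho> x)"
    using assms \<open>continuous_on M \<rho>\<close> by (intro continuous_intros) auto
  show ?thesis
  proof (rule kernel_limits_closed)
    fix e :: real
    assume "e > 0"
    with \<open>C \<ge> 0\<close> have "e / (C + 1) > 0"
      by simp
    then obtain h where "h \<in> real_multipliers" and h: "\<forall>x\<in>M. \<bar>f x / \<rho> x - h x\<bar> < e / (C + 1)"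
      using function_ring_on.Stone_Weierstrass_basic[OF function_ring_real_multipliers
          \<open>continuous_on M (\<lambda>x. f x / \<rho> x)\<close>] by blast
    then have "(\<lambda>x. complex_of_real (h x) * complex_of_real (\<rho> x)) \<in> kernel_limits"
      using \<rho>_limit by (intro multipliersD) (simp_all add: real_multipliers_def)
    moreover have "cmod (complex_of_real (f x) - complex_of_real (h x) * complex_of_real (\<rho> x)) \<le> e"
      if "x \<in> M" for x
    proof -
      have "norm (f x / \<rho> x - h x) \<le> e / (C + 1)"
        using h that by (simp add: less_imp_le)
      moreover have "f x - h x * \<rho> x = \<rho> x * (f x / \<rho> x - h x)"
        using \<rho>_pos[OF that] by (simp add: field_simps)
      ultimately show ?thesis
        using norm_mult_le_by_bound[OF \<open>C \<ge> 0\<close> C[OF that]]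
        by (simp flip: of_real_mult of_real_diff)
    qed
    ultimately show "\<exists>u\<in>kernel_limits. \<forall>x\<in>M. cmod (complex_of_real (f x) - u x) \<le> e"
      by (intro bexI[where x = "\<lambda>x. complex_of_real (h x) * complex_of_real (\<rho> x)"]) auto
  qed
qed

end

lemma cauchy_poles_frontier_closure:
  assumes "compact M" and "\<And>i. sym_domain (U i)" and "\<And>i. closure (U i) \<noteq> UNIV"
    and "\<And>i x. x \<in> M \<Longrightarrow> complex_of_real (x $ i) \<in> U i"
  shows "cauchy_poles M (\<lambda>i. frontier (closure (U i)))"
proof
  fix i
  have U: "open (U i)" "U i \<noteq> {}" "\<And>z. z \<in> U i \<Longrightarrow> cnj z \<in> U i"
    using assms(2)[of i] by (auto simp: sym_domain_def)
  show "frontier (closure (U i)) \<noteq> {}"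
    using U(2) assms(3)[of i] closure_subset[of "U i"] by (intro frontier_not_empty) auto
  fix x
  assume "x \<in> M"
  then show "complex_of_real (x $ i) \<notin> frontier (closure (U i))"
    by (intro not_in_frontier_closure_of_open U(1) assms(4))
next
  fix i \<zeta>
  assume "\<zeta> \<in> frontier (closure (U i))"
  moreover have "open (U i)" "\<And>z. z \<in> U i \<Longrightarrow> cnj z \<in> U i"
    using assms(2)[of i] by (auto simp: sym_domain_def)
  ultimately show "\<zeta> islimpt frontier (closure (U i))" and "cnj \<zeta> \<in> frontier (closure (U i))"
    by (auto intro: islimpt_frontier_closure_of_open cnj_in_frontier_closure)
qed (rule assms(1))

theorem theorem1:
  fixes Mi :: "'n::finite \<Rightarrow> real set"
    and U :: "'n \<Rightarrow> complex set"
    and f :: "real ^ 'n \<Rightarrow> real"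
    and \<epsilon> :: real
  defines "M \<equiv> {x :: real ^ 'n. \<forall>i. x $ i \<in> Mi i}"
  assumes "compact M"
    and "\<And>i. sym_domain (U i)"
    and "\<And>i. closure (U i) \<noteq> UNIV"
    and "\<And>i. complex_of_real ` Mi i \<subseteq> U i"
    and "continuous_on M f"
    and "\<epsilon> > 0"
  shows "\<exists>(m::nat) (\<xi> :: nat \<Rightarrow> complex ^ 'n) (\<theta> :: nat \<Rightarrow> complex) \<delta>.
           m \<ge> 1 \<and> (\<forall>k\<in>{1..m}. \<forall>i. \<xi> k $ i \<in> frontier (closure (U i))) \<and>
           \<delta> < \<epsilon> \<and>
           (\<forall>x\<in>M. norm (complex_of_real (f x) - (\<Sum>k=1..m. \<theta> k * cauchy_kernel (\<xi> k) x)) \<le> \<delta>)"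
proof -
  interpret cauchy_poles M "\<lambda>i. frontier (closure (U i))"
    using assms(2-5) by (intro cauchy_poles_frontier_closure) (auto simp: M_def image_subset_iff)
  have "\<epsilon> / 2 > 0"
    using assms(7) by simp
  then obtain s where "s \<in> kernel_sums"
    and s: "\<forall>x\<in>M. cmod (complex_of_real (f x) - s x) \<le> \<epsilon> / 2"
    by (rule kernel_limitsE[OF continuous_in_kernel_limits[OF assms(6)]])
  then obtain m :: nat and \<xi> \<theta> where "m \<ge> 1" and "\<forall>k\<in>{1..m}. \<xi> k \<in> pole_vectors"
    and "\<forall>x. s x = (\<Sum>k=1..m. \<theta> k * cauchy_kernel (\<xi> k) x)"
    using kernel_sums_eq_sum by blast
  with s assms(7) show ?thesis
    by (intro exI[of _ m] exI[of _ \<xi>] exI[of _ \<theta>] exI[of _ "\<epsilon> / 2"]) (auto simp: pole_vectors_def)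
qed

end
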